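(* Let $n\ge 1$ and let $G$ be a subgame with $|G|\le n$. For integers $d\ge 0$, $\ell\ge 0$, let $R(d,\ell)$ be the maximal total number of calls to $\mathrm{Solve}_\mathsf{E}$ and $\mathrm{Solve}_\mathsf{O}$ of Algorithm 2 (including the initial call) performed during an execution of $\mathrm{Solve}_\mathsf{E}(G,d,p_\mathsf{E},p_\mathsf{O})$ if $d$ is even, or of $\mathrm{Solve}_\mathsf{O}(G,d,p_\mathsf{O},p_\mathsf{E})$ if $d$ is odd, over all such subgames $G$ with priorities at most $d$ and all integers $p_\mathsf{E},p_\mathsf{O}\ge1$ with $\lfloor\log_2 p_\mathsf{E}\rfloor+\lfloor\log_2 p_\mathsf{O}\rfloor=\ell$. Then $R(d,\ell)\le 2\,n^{\ell}\binom{d+\ell}{\ell}-1$.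
   Context: A parity game is $\mathcal{G}=(V,V_\mathsf{E},E,\pi)$: $(V,E)$ a finite directed graph without self-loops, every vertex having a successor; $\pi\colon V\to\{1,\dots,d\}$ positive priorities; $V_\mathsf{E}$ Even's vertices, $V_\mathsf{O}=V\setminus V_\mathsf{E}$ Odd's vertices. A subgame is given by $G\subseteq V$ in which every vertex has a successor in $G$. $\mathrm{Attr}_\wp(S,G)$ is the set of vertices from which player $\wp$ has a strategy in $G$ agreeing only with plays reaching $S$. Algorithm 2. $\mathrm{Solve}_\mathsf{E}(G,d,p_\mathsf{E},p_\mathsf{O})$ (for even $d$): if $G=\emptyset$ or $p_\mathsf{E}\le 1$, return $\emptyset$. Otherwise: repeat $\{N_d:=\{v\in G:\pi(v)=d\}$; $H:=G\setminus\mathrm{Attr}_\mathsf{E}(N_d,G)$; $W_\mathsf{O}:=\mathrm{Solve}_\mathsf{O}(H,d-1,\lfloor p_\mathsf{O}/2\rfloor,p_\mathsf{E})$; $G:=G\setminus\mathrm{Attr}_\mathsf{O}(W_\mathsf{O},G)\}$ until $W_\mathsf{O}=\emptyset$. Then (with $H$ from the last repeat iteration) $W_\mathsf{O}:=\mathrm{Solve}_\mathsf{O}(H,d-1,p_\mathsf{O},p_\mathsf{E})$; $G:=G\setminus\mathrm{Attr}_\mathsf{O}(W_\mathsf{O},G)$. Then while $W_\mathsf{O}\ne\emptyset$: $\{N_d:=\{v\in G:\pi(v)=d\}$; $H:=G\setminus\mathrm{Attr}_\mathsf{E}(N_d,G)$; $W_\mathsf{O}:=\mathrm{Solve}_\mathsf{O}(H,d-1,\lfloor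 p_\mathsf{O}/2\rfloor,p_\mathsf{E})$; $G:=G\setminus\mathrm{Attr}_\mathsf{O}(W_\mathsf{O},G)\}$. Return $G$. $\mathrm{Solve}_\mathsf{O}(G,d,p_\mathsf{O},p_\mathsf{E})$ (for odd $d$) is the dual, obtained by swapping the roles of Even and Odd: it returns $\emptyset$ if $G=\emptyset$ or $p_\mathsf{O}\le 1$; otherwise it uses $H:=G\setminus\mathrm{Attr}_\mathsf{O}(N_d,G)$, $W_\mathsf{E}:=\mathrm{Solve}_\mathsf{E}(H,d-1,\lfloor p_\mathsf{E}/2\rfloor,p_\mathsf{O})$ in both loops, $W_\mathsf{E}:=\mathrm{Solve}_\mathsf{E}(H,d-1,p_\mathsf{E},p_\mathsf{O})$ in the middle step, and updates $G:=G\setminus\mathrm{Attr}_\mathsf{E}(W_\mathsf{E},G)$. *)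

theory Defs
  imports Complex_Main
begin

text \<open>Players are encoded as booleans: True = Even, False = Odd.
  The owner of vertex v is Even iff v is in VE.\<close>

definition parity_game :: "'v set \<Rightarrow> 'v set \<Rightarrow> ('v \<times> 'v) set \<Rightarrow> ('v \<Rightarrow> nat) \<Rightarrow> bool" where
  "parity_game V VE E \<pi> \<longleftrightarrow>
     finite V \<and> VE \<subseteq> V \<and> E \<subseteq> V \<times> V \<and>
     (\<forall>v. (v, v) \<notin> E) \<and>
     (\<forall>v\<in>V. \<exists>w. (v, w) \<in> E) \<and>
     (\<forall>v\<in>V. 1 \<le> \<pi> v)"

definition subgame :: "'v set \<Rightarrow> ('v \<times> 'v) set \<Rightarrow> 'v set \<Rightarrow> bool" where
  "subgame V E G \<longleftrightarrow> G \<subseteq> V \<and> (\<forall>v\<in>G. \<exists>w\<in>G. (v, w) \<in> E)"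

definition strategy_in :: "'v set \<Rightarrow> ('v \<times> 'v) set \<Rightarrow> bool \<Rightarrow> 'v set \<Rightarrow> ('v list \<Rightarrow> 'v) \<Rightarrow> bool" where
  "strategy_in VE E pl G \<sigma> \<longleftrightarrow>
     (\<forall>xs. xs \<noteq> [] \<and> last xs \<in> G \<and> (last xs \<in> VE) = pl \<longrightarrow>
        \<sigma> xs \<in> G \<and> (last xs, \<sigma> xs) \<in> E)"

definition consistent_play :: "'v set \<Rightarrow> ('v \<times> 'v) set \<Rightarrow> bool \<Rightarrow> 'v set \<Rightarrow> ('v list \<Rightarrow> 'v) \<Rightarrow> 'v \<Rightarrow> (nat \<Rightarrow> 'v) \<Rightarrow> bool" where
  "consistent_play VE E pl G \<sigma> v \<rho> \<longleftrightarrow>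
     \<rho> 0 = v \<and> (\<forall>i. \<rho> i \<in> G \<and> (\<rho> i, \<rho> (Suc i)) \<in> E) \<and>
     (\<forall>i. (\<rho> i \<in> VE) = pl \<longrightarrow> \<rho> (Suc i) = \<sigma> (map \<rho> [0..<Suc i]))"

definition attr :: "'v set \<Rightarrow> ('v \<times> 'v) set \<Rightarrow> bool \<Rightarrow> 'v set \<Rightarrow> 'v set \<Rightarrow> 'v set" where
  "attr VE E pl S G = {v \<in> G. \<exists>\<sigma>. strategy_in VE E pl G \<sigma> \<and>
       (\<forall>\<rho>. consistent_play VE E pl G \<sigma> v \<rho> \<longrightarrow> (\<exists>i. \<rho> i \<in> S))}"

text \<open>Executions of Algorithm 2 with call counts.
  solve_run VE E pi d G p q W c: the call Solve_pl(G,d,p,q), where pl is Even if d is even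
  and Odd otherwise, p is the precision of pl and q that of the opponent, terminates returning
  W and makes c calls to Solve_E/Solve_O in total (including itself).
  loop1 ... G p q Gf Hl c: the repeat-until loop started on G ends with set Gf, its last H is Hl,
  and it makes c Solve calls.
  loop2 ... G p q b Gf c: the while loop (with current condition b = (W \<noteq> {})) started on G
  ends with Gf making c Solve calls.\<close>
inductive solve_run :: "'v set \<Rightarrow> ('v \<times> 'v) set \<Rightarrow> ('v \<Rightarrow> nat) \<Rightarrow> nat \<Rightarrow> 'v set \<Rightarrow> nat \<Rightarrow> nat \<Rightarrow> 'v set \<Rightarrow> nat \<Rightarrow> bool"
  and loop1 :: "'v set \<Rightarrow> ('v \<times> 'v) set \<Rightarrow> ('v \<Rightarrow> nat) \<Rightarrow> nat \<Rightarrow> 'v set \<Rightarrow> nat \<Rightarrow> nat \<Rightarrow> 'v set \<Rightarrow> 'v set \<Rightarrow> nat \<Rightarrow> bool"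
  and loop2 :: "'v set \<Rightarrow> ('v \<times> 'v) set \<Rightarrow> ('v \<Rightarrow> nat) \<Rightarrow> nat \<Rightarrow> 'v set \<Rightarrow> nat \<Rightarrow> nat \<Rightarrow> bool \<Rightarrow> 'v set \<Rightarrow> nat \<Rightarrow> bool"
  for VE :: "'v set" and E :: "('v \<times> 'v) set" and \<pi> :: "'v \<Rightarrow> nat"
where
  solve_base:
    "G = {} \<or> p \<le> 1 \<Longrightarrow> solve_run VE E \<pi> d G p q {} 1"
| solve_step:
    "\<lbrakk> G \<noteq> {}; 1 < p;
       loop1 VE E \<pi> d G p q G1 H c1;
       solve_run VE E \<pi> (d - 1) H q p W c2;
       G2 = G1 - attr VE E (odd d) W G1;
       loop2 VE E \<pi> d G2 p q (W \<noteq> {}) G3 c3 \<rbrakk>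
     \<Longrightarrow> solve_run VE E \<pi> d G p q G3 (1 + c1 + c2 + c3)"
| loop1_stop:
    "\<lbrakk> H = G - attr VE E (even d) {v \<in> G. \<pi> v = d} G;
       solve_run VE E \<pi> (d - 1) H (q div 2) p W c;
       W = {} \<rbrakk>
     \<Longrightarrow> loop1 VE E \<pi> d G p q (G - attr VE E (odd d) W G) H c"
| loop1_cont:
    "\<lbrakk> H = G - attr VE E (even d) {v \<in> G. \<pi> v = d} G;
       solve_run VE E \<pi> (d - 1) H (q div 2) p W c;
       W \<noteq> {};
       loop1 VE E \<pi> d (G - attr VE E (odd d) W G) p q Gf Hl c' \<rbrakk>
     \<Longrightarrow> loop1 VE E \<pi> d G p q Gf Hl (c + c')"
| loop2_stop:
    "loop2 VE E \<pi> d G p q False G 0"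
| loop2_step:
    "\<lbrakk> H = G - attr VE E (even d) {v \<in> G. \<pi> v = d} G;
       solve_run VE E \<pi> (d - 1) H (q div 2) p W c;
       loop2 VE E \<pi> d (G - attr VE E (odd d) W G) p q (W \<noteq> {}) Gf c' \<rbrakk>
     \<Longrightarrow> loop2 VE E \<pi> d G p q True Gf (c + c')"

end

theory Submission
  imports Defs "HOL-Library.Discrete_Functions"
begin

(* A call Solve(G,d,p,q) with p >= 2 makes one call of depth d-1 with the opponent's full
   precision q, and a sequence of calls of depth d-1 with precision q/2.  Each of the latter,
   except the last one of each loop, returns a nonempty set whose attractor is then removed;
   as nonempty subgames have at least two vertices, there are at most |G| <= n of them.
   Hence R(d,l) <= 1 + n R(d-1,l-1) + R(d-1,l), and Pascal's rule turns this recurrence into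
   R(d,l) <= 2 n^l C(d+l,l) - 1. *)

locale game =
  fixes V VE :: "'v set" and E :: "('v \<times> 'v) set" and \<pi> :: "'v \<Rightarrow> nat"
  assumes parity_game: "parity_game V VE E \<pi>"
begin

lemma finite_subgame: "subgame V E G \<Longrightarrow> finite G"
  using parity_game by (auto simp: subgame_def parity_game_def intro: finite_subset)

lemma subgame_card_mono: "subgame V E G \<Longrightarrow> G' \<subseteq> G \<Longrightarrow> card G' \<le> card G"
  using card_mono finite_subgame by blast

lemma priority_ge_1: "subgame V E G \<Longrightarrow> v \<in> G \<Longrightarrow> 1 \<le> \<pi> v"
  using parity_game by (auto simp: subgame_def parity_game_def)

lemma card_subgame_ge_2:
  assumes sg: "subgame V E G" and "G \<noteq> {}"
  shows "2 \<le> card G"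
proof -
  obtain v where "v \<in> G" using assms(2) by blast
  then obtain w where vw: "v \<in> G" "w \<in> G" "(v, w) \<in> E"
    using sg by (auto simp: subgame_def)
  then have "v \<noteq> w" using parity_game by (auto simp: parity_game_def)
  then have "2 = card {v, w}" by simp
  also have "\<dots> \<le> card G" using vw finite_subgame[OF sg] by (intro card_mono) auto
  finally show ?thesis .
qed

lemma successor_choice:
  assumes "subgame V E G"
  obtains \<tau> where "\<And>xs. xs \<noteq> [] \<Longrightarrow> last xs \<in> G \<Longrightarrow> \<tau> xs \<in> G \<and> (last xs, \<tau> xs) \<in> E"
proof
  fix xs :: "'v list" assume "xs \<noteq> []" "last xs \<in> G"
  then show "(SOME w. w \<in> G \<and> (last xs, w) \<in> E) \<in> G \<and> (last xs, SOME w. w \<in> G \<and> (last xs, w) \<in> E) \<in> E"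
    using assms unfolding subgame_def by (metis (mono_tags, lifting) someI_ex)
qed

lemma consistent_play_exists:
  assumes sg: "subgame V E G" and \<sigma>: "strategy_in VE E pl G \<sigma>" and v: "v \<in> G"
  shows "\<exists>\<rho>. consistent_play VE E pl G \<sigma> v \<rho>"
proof -
  obtain \<tau> where \<tau>: "\<And>xs. xs \<noteq> [] \<Longrightarrow> last xs \<in> G \<Longrightarrow> \<tau> xs \<in> G \<and> (last xs, \<tau> xs) \<in> E"
    using successor_choice[OF sg] by blast
  define next_vertex where "next_vertex xs = (if (last xs \<in> VE) = pl then \<sigma> xs else \<tau> xs)" for xs
  have next_vertex: "next_vertex xs \<in> G \<and> (last xs, next_vertex xs) \<in> E"
    if "xs \<noteq> []" "last xs \<in> G" for xs
    using that \<sigma> \<tau> unfolding next_vertex_def strategy_in_def by auto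
  define history where "history = rec_nat [v] (\<lambda>_ h. h @ [next_vertex h])"
  define \<rho> where "\<rho> i = last (history i)" for i
  have history: "history i = map \<rho> [0..<Suc i]" for i
    by (induction i) (simp_all add: history_def \<rho>_def)
  have \<rho>_Suc: "\<rho> (Suc i) = next_vertex (map \<rho> [0..<Suc i])" for i
    using history[of i] by (simp add: \<rho>_def history_def)
  have \<rho>_in: "\<rho> i \<in> G" for i
  proof (induction i)
    case 0 show ?case using v by (simp add: \<rho>_def history_def)
  next
    case (Suc i) then show ?case using next_vertex[of "map \<rho> [0..<Suc i]"] \<rho>_Suc[of i] by simp
  qed
  have "(\<rho> i, \<rho> (Suc i)) \<in> E" for i
    using next_vertex[of "map \<rho> [0..<Suc i]"] \<rho>_Suc[of i] \<rho>_in[of i] by simp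
  moreover have "(\<rho> i \<in> VE) = pl \<Longrightarrow> \<rho> (Suc i) = \<sigma> (map \<rho> [0..<Suc i])" for i
    using \<rho>_Suc[of i] by (simp add: next_vertex_def)
  moreover have "\<rho> 0 = v" by (simp add: \<rho>_def history_def)
  ultimately have "consistent_play VE E pl G \<sigma> v \<rho>"
    unfolding consistent_play_def using \<rho>_in by blast
  then show ?thesis by blast
qed

lemma Int_subset_attr:
  assumes "subgame V E G"
  shows "S \<inter> G \<subseteq> attr VE E pl S G"
proof -
  obtain \<tau> where "\<And>xs. xs \<noteq> [] \<Longrightarrow> last xs \<in> G \<Longrightarrow> \<tau> xs \<in> G \<and> (last xs, \<tau> xs) \<in> E"
    using successor_choice[OF assms] by blast
  then have "strategy_in VE E pl G \<tau>" by (simp add: strategy_in_def)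
  then show ?thesis unfolding attr_def consistent_play_def by fastforce
qed

lemma attr_empty: "subgame V E G \<Longrightarrow> attr VE E pl {} G = {}"
  using consistent_play_exists unfolding attr_def by blast

lemma in_attr_if_successors_in_attr:
  assumes sg: "subgame V E G" and v: "v \<in> G"
    and successors: "\<And>w. w \<in> G \<Longrightarrow> (v, w) \<in> E \<Longrightarrow> w \<in> attr VE E pl S G"
  shows "v \<in> attr VE E pl S G"
proof -
  let ?A = "attr VE E pl S G"
  obtain \<tau> where \<tau>: "\<And>xs. xs \<noteq> [] \<Longrightarrow> last xs \<in> G \<Longrightarrow> \<tau> xs \<in> G \<and> (last xs, \<tau> xs) \<in> E"
    using successor_choice[OF sg] by blast
  have "\<forall>w\<in>?A. \<exists>\<sigma>'. strategy_in VE E pl G \<sigma>' \<and>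
      (\<forall>\<rho>. consistent_play VE E pl G \<sigma>' w \<rho> \<longrightarrow> (\<exists>i. \<rho> i \<in> S))"
    unfolding attr_def by blast
  then obtain \<sigma>\<^sub>w where \<sigma>\<^sub>w: "\<And>w. w \<in> ?A \<Longrightarrow> strategy_in VE E pl G (\<sigma>\<^sub>w w) \<and>
      (\<forall>\<rho>. consistent_play VE E pl G (\<sigma>\<^sub>w w) w \<rho> \<longrightarrow> (\<exists>i. \<rho> i \<in> S))"
    by (metis bchoice)
  \<comment> \<open>Move anywhere first; from the second vertex on, play the attractor strategy of that vertex.\<close>
  define \<sigma> where "\<sigma> xs = (if 2 \<le> length xs \<and> xs ! 1 \<in> ?A then \<sigma>\<^sub>w (xs ! 1) (tl xs) else \<tau> xs)" for xs
  have "strategy_in VE E pl G \<sigma>"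
    unfolding strategy_in_def
  proof (intro allI impI)
    fix xs assume xs: "xs \<noteq> [] \<and> last xs \<in> G \<and> (last xs \<in> VE) = pl"
    show "\<sigma> xs \<in> G \<and> (last xs, \<sigma> xs) \<in> E"
    proof (cases "2 \<le> length xs \<and> xs ! 1 \<in> ?A")
      case True
      then have "strategy_in VE E pl G (\<sigma>\<^sub>w (xs ! 1))" using \<sigma>\<^sub>w by blast
      moreover have "tl xs \<noteq> []" "last (tl xs) = last xs" using True by (cases xs; auto)+
      ultimately have "\<sigma>\<^sub>w (xs ! 1) (tl xs) \<in> G \<and> (last xs, \<sigma>\<^sub>w (xs ! 1) (tl xs)) \<in> E"
        using xs unfolding strategy_in_def by metis
      then show ?thesis using True by (simp add: \<sigma>_def)
    qed (use xs \<tau> in \<open>auto simp: \<sigma>_def\<close>)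
  qed
  moreover have "\<exists>i. \<rho> i \<in> S" if play: "consistent_play VE E pl G \<sigma> v \<rho>" for \<rho>
  proof -
    have "\<rho> 1 \<in> ?A" using play successors unfolding consistent_play_def by (metis One_nat_def)
    have "\<sigma> (map \<rho> [0..<Suc (Suc i)]) = \<sigma>\<^sub>w (\<rho> 1) (map (\<lambda>j. \<rho> (Suc j)) [0..<Suc i])" for i
      using \<open>\<rho> 1 \<in> ?A\<close> unfolding \<sigma>_def by (simp only: map_upt_Suc) simp
    then have "consistent_play VE E pl G (\<sigma>\<^sub>w (\<rho> 1)) (\<rho> 1) (\<lambda>i. \<rho> (Suc i))"
      using play unfolding consistent_play_def by (simp del: upt_Suc)
    then obtain i where "\<rho> (Suc i) \<in> S" using \<sigma>\<^sub>w[OF \<open>\<rho> 1 \<in> ?A\<close>] by blast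
    then show ?thesis ..
  qed
  ultimately show ?thesis using v unfolding attr_def by blast
qed

lemma subgame_Diff_attr:
  assumes sg: "subgame V E G"
  shows "subgame V E (G - attr VE E pl S G)"
  unfolding subgame_def
proof (intro conjI ballI)
  fix v assume v: "v \<in> G - attr VE E pl S G"
  show "\<exists>w\<in>G - attr VE E pl S G. (v, w) \<in> E"
    using in_attr_if_successors_in_attr[OF sg, of v] v by blast
qed (use sg in \<open>auto simp: subgame_def\<close>)

lemma Diff_attr_psubset:
  "subgame V E G \<Longrightarrow> W \<subseteq> G \<Longrightarrow> W \<noteq> {} \<Longrightarrow> G - attr VE E pl W G \<subset> G"
  using Int_subset_attr[of G W pl] by blast

definition prio_bounded_subgame :: "nat \<Rightarrow> 'v set \<Rightarrow> bool" where
  "prio_bounded_subgame d G \<longleftrightarrow> subgame V E G \<and> (\<forall>v\<in>G. \<pi> v \<le> d)"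

lemma prio_bounded_subgame_Diff_attr:
  "prio_bounded_subgame d G \<Longrightarrow> prio_bounded_subgame d (G - attr VE E pl S G)"
  using subgame_Diff_attr by (auto simp: prio_bounded_subgame_def)

lemma prio_bounded_subgame_card_mono:
  "prio_bounded_subgame d G \<Longrightarrow> G' \<subseteq> G \<Longrightarrow> card G' \<le> card G"
  using subgame_card_mono by (auto simp: prio_bounded_subgame_def)

lemma prio_bounded_subgame_depth_pos: "prio_bounded_subgame d G \<Longrightarrow> G \<noteq> {} \<Longrightarrow> 0 < d"
  using priority_ge_1 by (fastforce simp: prio_bounded_subgame_def)

lemma prio_bounded_subgame_Diff_top_attr:
  assumes "prio_bounded_subgame d G"
  shows "prio_bounded_subgame (d - 1) (G - attr VE E pl {v \<in> G. \<pi> v = d} G)"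
  using assms Int_subset_attr[of G "{v \<in> G. \<pi> v = d}" pl] subgame_Diff_attr[of G pl]
  by (fastforce simp: prio_bounded_subgame_def)

end

text \<open>Unlike the cardinality, the potential strictly decreases whenever a nonempty subgame shrinks,
  even to the empty set, because nonempty subgames have at least two vertices.\<close>
definition potential :: "'a set \<Rightarrow> nat" where
  "potential S = max 1 (card S)"

lemma potential_mono: "finite G \<Longrightarrow> G' \<subseteq> G \<Longrightarrow> potential G' \<le> potential G"
  unfolding potential_def by (meson card_mono max.mono order_refl)

lemma (in game) potential_Diff_attr:
  assumes sg: "subgame V E G" and "W \<subseteq> G"
  shows "potential (G - attr VE E pl W G) + of_bool (W \<noteq> {}) \<le> potential G"
proof (cases "W = {}")
  case True
  then show ?thesis using potential_mono[OF finite_subgame[OF sg]] by simp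
next
  case False
  then have "G - attr VE E pl W G \<subset> G" "G \<noteq> {}"
    using Diff_attr_psubset[OF sg assms(2)] assms(2) by auto
  then have "card (G - attr VE E pl W G) < card G" "2 \<le> card G"
    using psubset_card_mono finite_subgame[OF sg] card_subgame_ge_2[OF sg] by auto
  then show ?thesis using False unfolding potential_def by simp
qed

lemma run_invariants:
  shows "solve_run VE E \<pi> d G p q W c \<Longrightarrow> W \<subseteq> G"
    and "loop1 VE E \<pi> d G p q Gf Hl c \<Longrightarrow> Gf \<subseteq> G"
    and "loop2 VE E \<pi> d G p q b Gf c \<Longrightarrow> Gf \<subseteq> G"
  by (induction rule: solve_run_loop1_loop2.inducts) auto

definition call_bound :: "nat \<Rightarrow> nat \<Rightarrow> nat \<Rightarrow> nat" where
  "call_bound n d l = 2 * n ^ l * ((d + l) choose l) - 1"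

abbreviation loop_call_bound :: "nat \<Rightarrow> nat \<Rightarrow> nat \<Rightarrow> nat \<Rightarrow> nat" where
  "loop_call_bound n d p q \<equiv> call_bound n (d - 1) (floor_log p + floor_log q - 1)"

lemma call_bound_ge_1:
  assumes "1 \<le> n"
  shows "1 \<le> call_bound n d l"
proof -
  have "1 \<le> n ^ l * ((d + l) choose l)" using assms by (simp add: Suc_le_eq)
  then show ?thesis unfolding call_bound_def by linarith
qed

lemma call_bound_recurrence:
  assumes "1 \<le> n"
  shows "1 + n * call_bound n d l + call_bound n d (Suc l) \<le> call_bound n (Suc d) (Suc l)"
proof -
  define a where "a = n ^ l * ((d + l) choose l)"
  define b where "b = n ^ Suc l * ((d + Suc l) choose Suc l)"
  define z where "z = n ^ Suc l * ((d + Suc l) choose l)"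
  have "1 \<le> a" "1 \<le> b" using assms by (simp_all add: a_def b_def Suc_le_eq)
  have "(d + l) choose l \<le> Suc (d + l) choose l" by (cases l) simp_all
  then have "n * a \<le> z" by (simp add: a_def z_def)
  have "n * call_bound n d l = 2 * (n * a) - n"
    by (simp add: call_bound_def a_def diff_mult_distrib2)
  moreover have "call_bound n d (Suc l) = 2 * b - 1"
    by (simp add: call_bound_def b_def)
  moreover have "call_bound n (Suc d) (Suc l) = 2 * b + 2 * z - 1"
    by (simp add: call_bound_def b_def z_def algebra_simps)
  moreover have "n \<le> n * a" using \<open>1 \<le> a\<close> by simp
  ultimately show ?thesis using \<open>1 \<le> b\<close> \<open>n * a \<le> z\<close> assms by linarith
qed

lemma solve_run_trivial_cost: "solve_run VE E \<pi> d G p q W c \<Longrightarrow> p \<le> 1 \<Longrightarrow> c = 1"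
  by (induction rule: solve_run.cases) auto

context game
begin

lemma loop1_invariant:
  assumes "loop1 VE E \<pi> d G p q Gf Hl c" and "prio_bounded_subgame d G"
  shows "prio_bounded_subgame d Gf \<and> prio_bounded_subgame (d - 1) Hl \<and> Hl \<subseteq> Gf"
  using assms
proof (induction rule: solve_run_loop1_loop2.inducts(2)
    [where ?P1.0 = "\<lambda>_ _ _ _ _ _. True" and ?P3.0 = "\<lambda>_ _ _ _ _ _ _. True"])
  case (loop1_stop H G d q p W c)
  then show ?case
    using prio_bounded_subgame_Diff_top_attr[of d G "even d"] attr_empty[of G "odd d"]
    by (auto simp: prio_bounded_subgame_def)
next
  case (loop1_cont H G d q p W c Gf Hl c')
  then show ?case using prio_bounded_subgame_Diff_attr by blast
qed simp_all

lemma loop_iteration: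
  assumes G: "prio_bounded_subgame d G" "card G \<le> n" and "1 \<le> n"
    and H: "H = G - attr VE E (even d) {v \<in> G. \<pi> v = d} G"
    and run: "solve_run VE E \<pi> (d - 1) H (q div 2) p W c"
    and IH: "prio_bounded_subgame (d - 1) H \<longrightarrow> card H \<le> n \<longrightarrow>
      c \<le> call_bound n (d - 1) (floor_log (q div 2) + floor_log p)"
  shows "c \<le> loop_call_bound n d p q"
    and "loop_call_bound n d p q * (of_bool (W \<noteq> {}) + potential (G - attr VE E (odd d) W G))
      \<le> loop_call_bound n d p q * potential G"
proof -
  have "prio_bounded_subgame (d - 1) H"
    using prio_bounded_subgame_Diff_top_attr[OF G(1)] H by simp
  moreover have "card H \<le> n"
    using prio_bounded_subgame_card_mono[OF G(1)] G(2) H by (meson Diff_subset order_trans)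
  ultimately have c: "c \<le> call_bound n (d - 1) (floor_log (q div 2) + floor_log p)"
    using IH by blast
  show "c \<le> loop_call_bound n d p q"
  proof (cases "q \<le> 1")
    case True
    then show ?thesis using solve_run_trivial_cost[OF run] call_bound_ge_1[OF \<open>1 \<le> n\<close>] by simp
  next
    case False
    then have "floor_log (q div 2) + floor_log p = floor_log p + floor_log q - 1"
      using floor_log_rec[of q] by simp
    then show ?thesis using c by simp
  qed
  have "W \<subseteq> G" using run_invariants(1)[OF run] H by blast
  then show "loop_call_bound n d p q * (of_bool (W \<noteq> {}) + potential (G - attr VE E (odd d) W G))
      \<le> loop_call_bound n d p q * potential G"
    using potential_Diff_attr G(1) by (simp add: prio_bounded_subgame_def add.commute)
qed

lemma call_count_bound:
  assumes n: "1 \<le> n"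
  shows "solve_run VE E \<pi> d G p q W c \<Longrightarrow> prio_bounded_subgame d G \<longrightarrow> card G \<le> n \<longrightarrow>
      c \<le> call_bound n d (floor_log p + floor_log q)"
    and "loop1 VE E \<pi> d G p q Gf Hl c \<Longrightarrow> prio_bounded_subgame d G \<longrightarrow> card G \<le> n \<longrightarrow>
      c + loop_call_bound n d p q * potential Gf \<le> loop_call_bound n d p q * (1 + potential G)"
    and "loop2 VE E \<pi> d G p q b Gf c \<Longrightarrow> prio_bounded_subgame d G \<longrightarrow> card G \<le> n \<longrightarrow>
      c + loop_call_bound n d p q * potential Gf \<le> loop_call_bound n d p q * (of_bool b + potential G)"
proof (induction rule: solve_run_loop1_loop2.inducts)
  case (solve_base G p d q)
  then show ?case using call_bound_ge_1[OF n] by simp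
next
  case (solve_step G p d q G1 H c1 W c2 G2 G3 c3)
  let ?h = "loop_call_bound n d p q"
  show ?case
  proof (intro impI)
    assume G: "prio_bounded_subgame d G" "card G \<le> n"
    have G1: "prio_bounded_subgame d G1" and H: "prio_bounded_subgame (d - 1) H" "H \<subseteq> G1"
      using loop1_invariant[OF solve_step(3) G(1)] by auto
    have "G1 \<subseteq> G" by (rule run_invariants(2)[OF solve_step(3)])
    then have "card G1 \<le> n" "card H \<le> n"
      using H(2) prio_bounded_subgame_card_mono[OF G(1)] G(2) by (meson order_trans subset_trans)+
    then have c2: "c2 \<le> call_bound n (d - 1) (floor_log p + floor_log q)"
      using solve_step(6) H(1) by (simp add: add.commute)
    have c1: "c1 + ?h * potential G1 \<le> ?h * (1 + potential G)"
      using solve_step(4) G by blast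
    have c3: "c3 + ?h * potential G3 \<le> ?h * (of_bool (W \<noteq> {}) + potential G2)"
      using solve_step(7,9) prio_bounded_subgame_Diff_attr[OF G1]
        le_trans[OF prio_bounded_subgame_card_mono[OF G1 Diff_subset] \<open>card G1 \<le> n\<close>] by blast
    have "W \<subseteq> G1" using run_invariants(1)[OF solve_step(5)] H(2) by blast
    then have "?h * (of_bool (W \<noteq> {}) + potential G2) \<le> ?h * potential G1"
      using potential_Diff_attr G1 solve_step(7) by (simp add: prio_bounded_subgame_def add.commute)
    moreover have "?h \<le> ?h * potential G3" by (simp add: potential_def)
    moreover have "?h * potential G \<le> ?h * n" using G(2) n by (simp add: potential_def)
    ultimately have loops: "c1 + c3 \<le> ?h * n"
      using c1 c3 unfolding distrib_left mult_1_right by linarith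
    obtain d' where d: "d = Suc d'"
      using prio_bounded_subgame_depth_pos[OF G(1) solve_step(1)] gr0_implies_Suc by blast
    have "1 \<le> floor_log p" using floor_log_rec[of p] solve_step(2) by simp
    then obtain l' where l: "floor_log p + floor_log q = Suc l'" by (cases "floor_log p") auto
    have "1 + n * ?h + call_bound n (d - 1) (floor_log p + floor_log q)
        \<le> call_bound n d (floor_log p + floor_log q)"
      using call_bound_recurrence[OF n, of d' l'] d l by simp
    then show "1 + c1 + c2 + c3 \<le> call_bound n d (floor_log p + floor_log q)"
      using loops c2 by (simp add: mult.commute)
  qed
next
  case (loop1_stop H G d q p W c)
  let ?h = "loop_call_bound n d p q"
  show ?case
  proof (intro impI)
    assume G: "prio_bounded_subgame d G" "card G \<le> n"
    note iteration = loop_iteration[OF G n loop1_stop(1,2,3)]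
    have "?h * potential (G - attr VE E (odd d) W G) \<le> ?h * potential G"
      using iteration(2) loop1_stop(4) by simp
    then show "c + ?h * potential (G - attr VE E (odd d) W G) \<le> ?h * (1 + potential G)"
      using iteration(1) unfolding distrib_left mult_1_right by linarith
  qed
next
  case (loop1_cont H G d q p W c Gf Hl c')
  let ?h = "loop_call_bound n d p q"
  show ?case
  proof (intro impI)
    assume G: "prio_bounded_subgame d G" "card G \<le> n"
    note iteration = loop_iteration[OF G n loop1_cont(1,2,3)]
    have "c' + ?h * potential Gf \<le> ?h * (1 + potential (G - attr VE E (odd d) W G))"
      using loop1_cont(5) prio_bounded_subgame_Diff_attr[OF G(1)] le_trans[OF prio_bounded_subgame_card_mono[OF G(1) Diff_subset] G(2)]
      by blast
    moreover have "?h * (1 + potential (G - attr VE E (odd d) W G)) \<le> ?h * potential G"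
      using iteration(2) loop1_cont(6) by simp
    ultimately show "c + c' + ?h * potential Gf \<le> ?h * (1 + potential G)"
      using iteration(1) unfolding distrib_left mult_1_right by linarith
  qed
next
  case (loop2_stop d G p q)
  then show ?case by simp
next
  case (loop2_step H G d q p W c Gf c')
  let ?h = "loop_call_bound n d p q"
  show ?case
  proof (intro impI)
    assume G: "prio_bounded_subgame d G" "card G \<le> n"
    note iteration = loop_iteration[OF G n loop2_step(1,2,3)]
    have "c' + ?h * potential Gf \<le> ?h * (of_bool (W \<noteq> {}) + potential (G - attr VE E (odd d) W G))"
      using loop2_step(5) prio_bounded_subgame_Diff_attr[OF G(1)] le_trans[OF prio_bounded_subgame_card_mono[OF G(1) Diff_subset] G(2)]
      by blast
    then show "c + c' + ?h * potential Gf \<le> ?h * (of_bool True + potential G)"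
      using iteration unfolding of_bool_eq distrib_left mult_1_right by linarith
  qed
qed

lemma loop1_exists:
  assumes "prio_bounded_subgame d G"
    and inner: "\<And>H. prio_bounded_subgame (d - 1) H \<Longrightarrow> \<exists>W c. solve_run VE E \<pi> (d - 1) H (q div 2) p W c"
  shows "\<exists>Gf Hl c. loop1 VE E \<pi> d G p q Gf Hl c"
proof -
  have "finite G" using assms(1) finite_subgame by (simp add: prio_bounded_subgame_def)
  then show ?thesis using assms(1)
  proof (induction G rule: finite_psubset_induct)
    case (psubset G)
    define H where "H = G - attr VE E (even d) {v \<in> G. \<pi> v = d} G"
    obtain W c where run: "solve_run VE E \<pi> (d - 1) H (q div 2) p W c"
      using inner prio_bounded_subgame_Diff_top_attr[OF psubset.prems] unfolding H_def by blast
    show ?case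
    proof (cases "W = {}")
      case True
      then show ?thesis using loop1_stop[OF H_def run True] by blast
    next
      case False
      have "W \<subseteq> G" using run_invariants(1)[OF run] H_def by blast
      then have "G - attr VE E (odd d) W G \<subset> G"
        using Diff_attr_psubset False psubset.prems by (simp add: prio_bounded_subgame_def)
      then obtain Gf Hl c' where "loop1 VE E \<pi> d (G - attr VE E (odd d) W G) p q Gf Hl c'"
        using psubset.IH[OF _ prio_bounded_subgame_Diff_attr[OF psubset.prems]] by blast
      then show ?thesis using loop1_cont[OF H_def run False] by blast
    qed
  qed
qed

lemma loop2_exists:
  assumes "prio_bounded_subgame d G"
    and inner: "\<And>H. prio_bounded_subgame (d - 1) H \<Longrightarrow> \<exists>W c. solve_run VE E \<pi> (d - 1) H (q div 2) p W c"
  shows "\<exists>Gf c. loop2 VE E \<pi> d G p q b Gf c"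
proof -
  have "finite G" using assms(1) finite_subgame by (simp add: prio_bounded_subgame_def)
  then show ?thesis using assms(1)
  proof (induction G arbitrary: b rule: finite_psubset_induct)
    case (psubset G)
    show ?case
    proof (cases b)
      case False
      then have "b = False" by simp
      then show ?thesis using loop2_stop by blast
    next
      case True
      define H where "H = G - attr VE E (even d) {v \<in> G. \<pi> v = d} G"
      obtain W c where run: "solve_run VE E \<pi> (d - 1) H (q div 2) p W c"
        using inner prio_bounded_subgame_Diff_top_attr[OF psubset.prems] unfolding H_def by blast
      have "\<exists>Gf c'. loop2 VE E \<pi> d (G - attr VE E (odd d) W G) p q (W \<noteq> {}) Gf c'"
      proof (cases "W = {}")
        case True
        then show ?thesis using loop2_stop by fastforce
      next
        case False
        have "W \<subseteq> G" using run_invariants(1)[OF run] H_def by blast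
        then have "G - attr VE E (odd d) W G \<subset> G"
          using Diff_attr_psubset False psubset.prems by (simp add: prio_bounded_subgame_def)
        then show ?thesis using psubset.IH[OF _ prio_bounded_subgame_Diff_attr[OF psubset.prems]] by blast
      qed
      then obtain Gf c' where "loop2 VE E \<pi> d (G - attr VE E (odd d) W G) p q (W \<noteq> {}) Gf c'"
        by blast
      then have "loop2 VE E \<pi> d G p q True Gf (c + c')" by (rule loop2_step[OF H_def run])
      then show ?thesis using True by auto
    qed
  qed
qed

lemma solve_run_exists: "prio_bounded_subgame d G \<Longrightarrow> \<exists>W c. solve_run VE E \<pi> d G p q W c"
proof (induction d arbitrary: G p q)
  case 0
  then have "G = {}" using prio_bounded_subgame_depth_pos by blast
  then show ?case using solve_base by blast
next
  case (Suc d)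
  show ?case
  proof (cases "G = {} \<or> p \<le> 1")
    case True
    then show ?thesis using solve_base by blast
  next
    case False
    have inner: "\<exists>W c. solve_run VE E \<pi> (Suc d - 1) H r s W c"
      if "prio_bounded_subgame (Suc d - 1) H" for H r s
      using Suc.IH that by simp
    obtain G1 H c1 where loop1: "loop1 VE E \<pi> (Suc d) G p q G1 H c1"
      using loop1_exists[OF Suc.prems inner] by blast
    then have G1: "prio_bounded_subgame (Suc d) G1" and H: "prio_bounded_subgame d H"
      using loop1_invariant[OF loop1 Suc.prems] by auto
    obtain W c2 where run: "solve_run VE E \<pi> (Suc d - 1) H q p W c2"
      using inner[of H q p] H by auto
    obtain G3 c3 where loop2:
      "loop2 VE E \<pi> (Suc d) (G1 - attr VE E (odd (Suc d)) W G1) p q (W \<noteq> {}) G3 c3"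
      using loop2_exists[OF prio_bounded_subgame_Diff_attr[OF G1] inner] by blast
    show ?thesis using solve_step[OF _ _ loop1 run refl loop2] False by auto
  qed
qed

end

lemma int_floor_log: "1 \<le> x \<Longrightarrow> int (floor_log x) = \<lfloor>log 2 (real x)\<rfloor>"
  by (simp add: floor_log_altdef)

theorem mainTheorem7:
  fixes V VE :: "'v set" and E :: "('v \<times> 'v) set" and \<pi> :: "'v \<Rightarrow> nat"
    and G :: "'v set" and n d l pE pO :: nat
  assumes "parity_game V VE E \<pi>"
    and "1 \<le> n"
    and "subgame V E G"
    and "card G \<le> n"
    and "\<forall>v\<in>G. \<pi> v \<le> d"
    and "1 \<le> pE" and "1 \<le> pO"
    and "\<lfloor>log 2 (real pE)\<rfloor> + \<lfloor>log 2 (real pO)\<rfloor> = int l"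
  shows "(let p = (if even d then pE else pO); q = (if even d then pO else pE) in
           (\<exists>W c. solve_run VE E \<pi> d G p q W c) \<and>
           (\<forall>W c. solve_run VE E \<pi> d G p q W c \<longrightarrow>
                  c \<le> 2 * n ^ l * ((d + l) choose l) - 1))"
proof -
  interpret game V VE E \<pi> by (rule game.intro) (fact assms(1))
  define p where "p = (if even d then pE else pO)"
  define q where "q = (if even d then pO else pE)"
  have G: "prio_bounded_subgame d G" using assms(3,5) by (simp add: prio_bounded_subgame_def)
  have "floor_log p + floor_log q = l"
    using int_floor_log[OF assms(6)] int_floor_log[OF assms(7)] assms(8) unfolding p_def q_def by auto
  then have "c \<le> 2 * n ^ l * ((d + l) choose l) - 1" if "solve_run VE E \<pi> d G p q W c" for W c
    using call_count_bound(1)[OF assms(2) that] G assms(4) by (simp add: call_bound_def)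
  then show ?thesis using solve_run_exists[OF G] by (simp add: p_def q_def Let_def)
qed

end
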